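(* Let $D$ be a double extended meta-interpreter, $P$ a definite program, $Q_0$ an atomic query of the language of $P$, and $u_1,\dots,u_n$ terms. Then for every call $\mathit{solve}(Q,t_1,\dots,t_n)\in\mathrm{Call}(D\cup\mathit{ce}^D(P),\mathit{solve}(Q_0,u_1,\dots,u_n))$ there exists a call $\mathit{solve}(G)\in\mathrm{Call}(M_0\cup\mathit{ce}(P),\mathit{solve}(Q_0))$ such that $Q$ is an instance of $G$.
   Context: Logic programs are definite; LD-derivations use the leftmost selection rule. For a program $P$ and a set of queries $S$, $\mathrm{Call}(P,S)$ is the set of atoms $A$ such that a variant of $A$ is a selected atom in some branch of the LD-tree of $P\cup\{Q\}$ for some $Q\in S$; $\mathrm{Call}(P,Q)=\mathrm{Call}(P,\{Q\})$. A double extended meta-interpreter is a definite program consisting of three clauses of the form $\mathit{solve}(\mathit{true},t_{11},\dots,t_{1n})\leftarrow C_{11},\dots,C_{1m_1}.$ $\mathit{solve}((A,B),t_{21},\dots,t_{2n})\leftarrow D_{11},\dots,D_{1k_1},\mathit{solve}(A,t_{31},\dots,t_{3n}),D_{21},\dots,D_{2k_2},\mathit{solve}(B,t_{41},\dots,t_{4n}),C_{21},\dots,C_{2m_2}.$ $\mathit{solve}(A,t_{51},\dots,t_{5n})\leftarrow D_{31},\dots,D_{3k_3},\mathit{clause}(A,B,s_1,\dots,s_k),D_{41},\dots,D_{4k_4},\mathit{solve}(B,t_{61},\dots,t_{6n}),C_{31},\dots,C_{3m_3}.$ where $A,B$ are variables (the meta-variables), the $t_{ij},s_j$ are terms, together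 with clauses defining the other predicates occurring in the atoms $C_{kl},D_{pq}$, none of which contain $\mathit{solve}$ or $\mathit{clause}$. A clause body $B_1,\dots,B_m$ is encoded as the term $(B_1,(B_2,\dots,B_m))$ using the binary functor $,/2$ and an empty body as $\mathit{true}$; $\mathit{ce}(P)$ is the set of facts $\mathit{clause}(H,B)$, one per clause $H\leftarrow B$ of $P$; $\mathit{ce}^D(P)$ is a set of facts $\mathit{clause}(H,B,s_1,\dots,s_k)$ such that for every clause $H\leftarrow B$ of $P$ there is a unique fact of the form $\mathit{clause}(H,B,\dots)$ in it and every fact in it comes from a clause of $P$. The symbols $,/2$, $\mathit{clause}$, $\mathit{solve}$ do not occur in the language of $P$. The ``vanilla'' meta-interpreter $M_0$ is: $\mathit{solve}(\mathit{true}).$ $\mathit{solve}((A,B))\leftarrow\mathit{solve}(A),\mathit{solve}(B).$ $\mathit{solve}(H)\leftarrow\mathit{clause}(H,B),\mathit{solve}(B).$ *)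

theory Defs
  imports Main
begin

text \<open>Terms (and atoms) over function/predicate symbols named by strings;
  variables are natural numbers.  A symbol is identified by name and arity.\<close>
datatype trm = Var nat | Fn string "trm list"

fun subst :: "(nat \<Rightarrow> trm) \<Rightarrow> trm \<Rightarrow> trm" where
  "subst \<sigma> (Var x) = \<sigma> x"
| "subst \<sigma> (Fn f ts) = Fn f (map (subst \<sigma>) ts)"

fun vars :: "trm \<Rightarrow> nat set" where
  "vars (Var x) = {x}"
| "vars (Fn f ts) = (\<Union>t\<in>set ts. vars t)"

fun syms :: "trm \<Rightarrow> (string \<times> nat) set" where
  "syms (Var x) = {}"
| "syms (Fn f ts) = insert (f, length ts) (\<Union>t\<in>set ts. syms t)"

definition is_atom :: "trm \<Rightarrow> bool" where
  "is_atom t \<longleftrightarrow> (\<exists>f ts. t = Fn f ts)"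

definition is_mgu :: "(nat \<Rightarrow> trm) \<Rightarrow> trm \<Rightarrow> trm \<Rightarrow> bool" where
  "is_mgu \<theta> s t \<longleftrightarrow> subst \<theta> s = subst \<theta> t \<and>
     (\<forall>\<sigma>. subst \<sigma> s = subst \<sigma> t \<longrightarrow> (\<exists>\<delta>. \<forall>x. \<sigma> x = subst \<delta> (\<theta> x)))"

definition variant :: "trm \<Rightarrow> trm \<Rightarrow> bool" where
  "variant s t \<longleftrightarrow> (\<exists>\<rho>. bij \<rho> \<and> s = subst (Var \<circ> \<rho>) t)"

definition instance_of :: "trm \<Rightarrow> trm \<Rightarrow> bool" where
  "instance_of s t \<longleftrightarrow> (\<exists>\<sigma>. s = subst \<sigma> t)"

type_synonym clause = "trm \<times> trm list"   \<comment> \<open>head, body\<close>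
type_synonym query = "trm list"
type_synonym program = "clause set"

definition definite_program :: "program \<Rightarrow> bool" where
  "definite_program P \<longleftrightarrow> finite P \<and>
     (\<forall>(H, B) \<in> P. is_atom H \<and> (\<forall>b \<in> set B. is_atom b))"

definition ld_step :: "program \<Rightarrow> query \<Rightarrow> query \<Rightarrow> bool" where
  "ld_step P Q Q' \<longleftrightarrow> (\<exists>A R H B \<rho> \<theta>. Q = A # R \<and> (H, B) \<in> P \<and> bij \<rho> \<and>
     (vars (subst (Var \<circ> \<rho>) H) \<union> (\<Union>b\<in>set B. vars (subst (Var \<circ> \<rho>) b)))
        \<inter> (\<Union>q\<in>set Q. vars q) = {} \<and>
     is_mgu \<theta> A (subst (Var \<circ> \<rho>) H) \<and>
     Q' = map (subst \<theta>) (map (subst (Var \<circ> \<rho>)) B @ R))"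

text \<open>Call(P,S): atoms A such that a variant of A is the selected (leftmost) atom
  of some node of the LD-tree of P \<union> {Q}, for some Q in S.\<close>
definition calls :: "program \<Rightarrow> query set \<Rightarrow> trm set" where
  "calls P S = {A. \<exists>Q\<in>S. \<exists>A' R. (ld_step P)\<^sup>*\<^sup>* Q (A' # R) \<and> variant A A'}"

definition no_meta :: "trm \<Rightarrow> bool" where
  "no_meta t \<longleftrightarrow> (\<forall>(f, m) \<in> syms t. f \<noteq> ''solve'' \<and> f \<noteq> ''clause'')"

text \<open>In the language of P: none of ,/2, clause, solve occurs\<close>
definition in_obj_lang :: "trm \<Rightarrow> bool" where
  "in_obj_lang t \<longleftrightarrow> no_meta t \<and> ('','', 2) \<notin> syms t"

fun enc_body :: "trm list \<Rightarrow> trm" where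
  "enc_body [] = Fn ''true'' []"
| "enc_body [b] = b"
| "enc_body (b # c # bs) = Fn '','' [b, enc_body (c # bs)]"

definition ce :: "program \<Rightarrow> program" where
  "ce P = {(Fn ''clause'' [H, enc_body B], []) | H B. (H, B) \<in> P}"

text \<open>F is an admissible ce^D(P) with k extra arguments\<close>
definition is_ceD :: "nat \<Rightarrow> program \<Rightarrow> program \<Rightarrow> bool" where
  "is_ceD k P F \<longleftrightarrow>
     (\<forall>c \<in> F. \<exists>H B ss. c = (Fn ''clause'' (H # enc_body B # ss), []) \<and> length ss = k \<and> (H, B) \<in> P) \<and>
     (\<forall>(H, B) \<in> P. \<exists>!c \<in> F. \<exists>ss. c = (Fn ''clause'' (H # enc_body B # ss), []))"

text \<open>The vanilla meta-interpreter M0 (variables 0 = A, 1 = B)\<close>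
definition M0 :: program where
  "M0 = {(Fn ''solve'' [Fn ''true'' []], []),
         (Fn ''solve'' [Fn '','' [Var 0, Var 1]], [Fn ''solve'' [Var 0], Fn ''solve'' [Var 1]]),
         (Fn ''solve'' [Var 0], [Fn ''clause'' [Var 0, Var 1], Fn ''solve'' [Var 1]])}"

text \<open>D is a double extended meta-interpreter whose solve has n extra arguments and
  whose clause atom has k extra arguments.  a, b are the meta-variables A, B;
  R are the clauses defining the auxiliary predicates.\<close>
definition double_ext_mi :: "program \<Rightarrow> nat \<Rightarrow> nat \<Rightarrow> bool" where
  "double_ext_mi D n k \<longleftrightarrow>
    (\<exists>a b t1 t2 t3 t4 t5 t6 s C1 C2 C3 D1 D2 D3 D4 R.
       a \<noteq> b \<and>
       length t1 = n \<and> length t2 = n \<and> length t3 = n \<and> length t4 = n \<and>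
       length t5 = n \<and> length t6 = n \<and> length s = k \<and>
       (\<forall>c \<in> set (C1 @ C2 @ C3 @ D1 @ D2 @ D3 @ D4). is_atom c \<and> no_meta c) \<and>
       finite R \<and>
       (\<forall>(H, B) \<in> R. is_atom H \<and> no_meta H \<and> (\<forall>c \<in> set B. is_atom c \<and> no_meta c)) \<and>
       D = {(Fn ''solve'' (Fn ''true'' [] # t1), C1),
            (Fn ''solve'' (Fn '','' [Var a, Var b] # t2),
               D1 @ [Fn ''solve'' (Var a # t3)] @ D2 @ [Fn ''solve'' (Var b # t4)] @ C2),
            (Fn ''solve'' (Var a # t5),
               D3 @ [Fn ''clause'' (Var a # Var b # s)] @ D4 @ [Fn ''solve'' (Var b # t6)] @ C3)}
           \<union> R)"

end

theory Submission
  imports Defs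
begin

(* Project every query of D \<union> ce^D(P) onto its meta calls: its solve and clause atoms, with the
   extra arguments dropped.  Each clause of D \<union> ce^D(P) either has a non-meta head and no meta
   calls in its body, or projects onto an instance of a clause of M0 \<union> ce(P).  By the lifting
   lemma, every LD-step of the extended interpreter is therefore matched by zero or one LD-steps
   of the vanilla one, and the projected query stays an instance of the vanilla query.  In
   particular, the selected solve atom of the extended interpreter is an instance of an atom
   selected by M0.  Lifting needs most general unifiers to exist; this is shown with the
   Martelli-Montanari transformations. *)

lemma subst_subst: "subst \<sigma> (subst \<tau> t) = subst (subst \<sigma> \<circ> \<tau>) t"
  by (induction t) auto

lemma subst_comp_subst: "subst \<sigma> \<circ> subst \<tau> = subst (subst \<sigma> \<circ> \<tau>)"
  by (simp add: fun_eq_iff subst_subst)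

lemma subst_Var [simp]: "subst Var t = t"
  by (induction t) (auto simp: map_idI)

lemma subst_cong: "(\<And>x. x \<in> vars t \<Longrightarrow> \<sigma> x = \<tau> x) \<Longrightarrow> subst \<sigma> t = subst \<tau> t"
  by (induction t) auto

lemma vars_subst: "vars (subst \<sigma> t) = (\<Union>x \<in> vars t. vars (\<sigma> x))"
  by (induction t) auto

lemma finite_vars [simp]: "finite (vars t)"
  by (induction t) auto

lemma size_subst_ge: "x \<in> vars t \<Longrightarrow> size (\<sigma> x) \<le> size (subst \<sigma> t)"
proof (induction t)
  case (Fn f ts)
  then obtain s where "s \<in> set ts" "size (\<sigma> x) \<le> size (subst \<sigma> s)" by auto
  then show ?case using size_list_estimation'[of s ts "size (\<sigma> x)" "size \<circ> subst \<sigma>"] by (simp add: le_SucI)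
qed simp

lemma occurs_check:
  assumes "x \<in> vars t" and "t \<noteq> Var x"
  shows "\<sigma> x \<noteq> subst \<sigma> t"
proof -
  obtain f ts s where t: "t = Fn f ts" and s: "s \<in> set ts" "x \<in> vars s"
    using assms by (cases t) auto
  have "size (\<sigma> x) \<le> size_list (size \<circ> subst \<sigma>) ts"
    using s size_subst_ge[of x s \<sigma>] size_list_estimation'[of s ts _ "size \<circ> subst \<sigma>"] by simp
  then show ?thesis using t by auto
qed

section \<open>Most general unifiers\<close>

definition unifiers :: "(trm \<times> trm) list \<Rightarrow> (nat \<Rightarrow> trm) set" where
  "unifiers E = {\<sigma>. \<forall>(s, t) \<in> set E. subst \<sigma> s = subst \<sigma> t}"

definition is_mgu_list :: "(nat \<Rightarrow> trm) \<Rightarrow> (trm \<times> trm) list \<Rightarrow> bool" where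
  "is_mgu_list \<theta> E \<longleftrightarrow> \<theta> \<in> unifiers E \<and> (\<forall>\<sigma> \<in> unifiers E. \<exists>\<delta>. \<sigma> = subst \<delta> \<circ> \<theta>)"

definition eqn_vars :: "(trm \<times> trm) list \<Rightarrow> nat set" where
  "eqn_vars E = (\<Union>(s, t) \<in> set E. vars s \<union> vars t)"

definition eqn_size :: "(trm \<times> trm) list \<Rightarrow> nat" where
  "eqn_size E = (\<Sum>(s, t) \<leftarrow> E. size s + size t + 1)"

definition subst_eqns :: "(nat \<Rightarrow> trm) \<Rightarrow> (trm \<times> trm) list \<Rightarrow> (trm \<times> trm) list" where
  "subst_eqns \<sigma> E = map (\<lambda>(s, t). (subst \<sigma> s, subst \<sigma> t)) E"

lemma unifiers_Nil [simp]: "unifiers [] = UNIV"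
  by (simp add: unifiers_def)

lemma unifiers_Cons [simp]:
  "\<sigma> \<in> unifiers ((s, t) # E) \<longleftrightarrow> subst \<sigma> s = subst \<sigma> t \<and> \<sigma> \<in> unifiers E"
  by (simp add: unifiers_def)

lemma unifiers_append [simp]: "\<sigma> \<in> unifiers (E @ E') \<longleftrightarrow> \<sigma> \<in> unifiers E \<and> \<sigma> \<in> unifiers E'"
  by (auto simp: unifiers_def)

lemma unifiers_zip:
  "length ss = length ts \<Longrightarrow> \<sigma> \<in> unifiers (zip ss ts) \<longleftrightarrow> map (subst \<sigma>) ss = map (subst \<sigma>) ts"
  by (induction ss ts rule: list_induct2) auto

lemma eqn_vars_zip:
  "length ss = length ts \<Longrightarrow> eqn_vars (zip ss ts) = (\<Union>s \<in> set ss. vars s) \<union> (\<Union>t \<in> set ts. vars t)"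
  by (induction ss ts rule: list_induct2) (auto simp: eqn_vars_def)

lemma eqn_size_zip:
  "length ss = length ts \<Longrightarrow> eqn_size (zip ss ts) \<le> size_list size ss + size_list size ts"
  by (induction ss ts rule: list_induct2) (auto simp: eqn_size_def)

lemma finite_eqn_vars [simp]: "finite (eqn_vars E)"
  by (auto simp: eqn_vars_def)

lemma is_mgu_list_Nil: "is_mgu_list Var []"
proof -
  have "\<sigma> = subst \<sigma> \<circ> Var" for \<sigma> by auto
  then show ?thesis unfolding is_mgu_list_def unifiers_Nil by blast
qed

lemma is_mgu_list_cong: "unifiers E = unifiers E' \<Longrightarrow> is_mgu_list \<theta> E \<longleftrightarrow> is_mgu_list \<theta> E'"
  by (simp add: is_mgu_list_def)

lemma unifiers_subst_eqns:
  assumes "\<sigma> x = subst \<sigma> t"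
  shows "\<sigma> \<in> unifiers (subst_eqns (Var(x := t)) E) \<longleftrightarrow> \<sigma> \<in> unifiers E"
proof -
  have "subst \<sigma> \<circ> Var(x := t) = \<sigma>" using assms by auto
  then show ?thesis by (simp add: unifiers_def subst_eqns_def subst_subst split_def)
qed

lemma is_mgu_list_elim_var:
  assumes x: "x \<notin> vars t" and mgu: "is_mgu_list \<theta> (subst_eqns (Var(x := t)) E)"
  shows "is_mgu_list (subst \<theta> \<circ> Var(x := t)) ((Var x, t) # E)"
proof -
  let ?\<theta> = "subst \<theta> \<circ> Var(x := t)"
  have "subst (Var(x := t)) t = t"
    using x subst_cong[of t "Var(x := t)" Var] by fastforce
  then have "?\<theta> x = subst ?\<theta> t" by (simp add: subst_subst[symmetric])
  moreover have "\<theta> \<in> unifiers (subst_eqns (Var(x := t)) E)"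
    using mgu by (simp add: is_mgu_list_def)
  then have "?\<theta> \<in> unifiers E"
    by (simp add: unifiers_def subst_eqns_def subst_subst split_def)
  moreover have "\<exists>\<delta>. \<sigma> = subst \<delta> \<circ> ?\<theta>" if \<sigma>: "\<sigma> \<in> unifiers ((Var x, t) # E)" for \<sigma>
  proof -
    have x\<sigma>: "\<sigma> x = subst \<sigma> t" using \<sigma> by simp
    then have "\<sigma> \<in> unifiers (subst_eqns (Var(x := t)) E)"
      using \<sigma> unifiers_subst_eqns by simp
    then obtain \<delta> where "\<sigma> = subst \<delta> \<circ> \<theta>"
      using mgu by (auto simp: is_mgu_list_def)
    then have "\<sigma> = subst \<sigma> \<circ> Var(x := t)" "subst \<sigma> = subst \<delta> \<circ> subst \<theta>"
      using x\<sigma> by (auto simp: subst_subst)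
    then show ?thesis by (metis comp_assoc)
  qed
  ultimately show ?thesis by (simp add: is_mgu_list_def)
qed

lemma card_eqn_vars_elim_var:
  assumes "x \<notin> vars t"
  shows "card (eqn_vars (subst_eqns (Var(x := t)) E)) < card (eqn_vars ((Var x, t) # E))"
proof (rule psubset_card_mono)
  have "eqn_vars (subst_eqns (Var(x := t)) E) \<subseteq> eqn_vars ((Var x, t) # E) - {x}"
    using assms by (auto simp: eqn_vars_def subst_eqns_def vars_subst split: if_splits)
  then show "eqn_vars (subst_eqns (Var(x := t)) E) \<subset> eqn_vars ((Var x, t) # E)"
    by (auto simp: eqn_vars_def)
qed simp

lemma unifiable_Cons_cases:
  assumes \<sigma>: "\<sigma> \<in> unifiers ((s, t) # E)"
  obtains (reduce) E' where "unifiers E' = unifiers ((s, t) # E)"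
      and "eqn_vars E' \<subseteq> eqn_vars ((s, t) # E)" and "eqn_size E' < eqn_size ((s, t) # E)"
    | (elim) x u where "unifiers ((Var x, u) # E) = unifiers ((s, t) # E)"
      and "eqn_vars ((Var x, u) # E) = eqn_vars ((s, t) # E)" and "x \<notin> vars u"
proof -
  have elim_if: thesis if "s = Var x \<and> u = t \<or> t = Var x \<and> u = s" and "u \<noteq> Var x" for x u
  proof -
    have same: "unifiers ((Var x, u) # E) = unifiers ((s, t) # E)"
      "eqn_vars ((Var x, u) # E) = eqn_vars ((s, t) # E)"
      using that(1) by (auto simp: unifiers_def eqn_vars_def)
    then have "\<sigma> x = subst \<sigma> u" using \<sigma> by (metis subst.simps(1) unifiers_Cons)
    then have "x \<notin> vars u" using occurs_check that(2) by blast
    with same show thesis by (rule elim)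
  qed
  consider (trivial) "s = t" | (var_left) x where "s = Var x" "t \<noteq> Var x"
    | (var_right) x where "t = Var x" "s \<noteq> Var x" | (fn) f ss g ts where "s = Fn f ss" "t = Fn g ts"
    by (cases s; cases t) auto
  then show thesis
  proof cases
    case trivial
    then show thesis by (intro reduce[of E]) (auto simp: unifiers_def eqn_vars_def eqn_size_def)
  next
    case var_left
    then show thesis by (intro elim_if[of x t]) auto
  next
    case var_right
    then show thesis by (intro elim_if[of x s]) auto
  next
    case fn
    then have "f = g" and len: "length ss = length ts"
      using \<sigma> map_eq_imp_length_eq by auto
    show thesis
    proof (rule reduce)
      show "unifiers (zip ss ts @ E) = unifiers ((s, t) # E)"
        using fn \<open>f = g\<close> unifiers_zip[OF len] by auto
      show "eqn_vars (zip ss ts @ E) \<subseteq> eqn_vars ((s, t) # E)"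
        using fn eqn_vars_zip[OF len] by (auto simp: eqn_vars_def)
      show "eqn_size (zip ss ts @ E) < eqn_size ((s, t) # E)"
        using fn eqn_size_zip[OF len] by (simp add: eqn_size_def)
    qed
  qed
qed

lemma mgu_list_exists: "\<sigma> \<in> unifiers E \<Longrightarrow> \<exists>\<theta>. is_mgu_list \<theta> E"
proof (induction E arbitrary: \<sigma> rule: wf_induct[OF wf_measures[of "[\<lambda>E. card (eqn_vars E), eqn_size]"]])
  case (1 E)
  have IH: "\<exists>\<theta>. is_mgu_list \<theta> E'"
    if "\<sigma>' \<in> unifiers E'" and "card (eqn_vars E') < card (eqn_vars E) \<or>
        eqn_vars E' \<subseteq> eqn_vars E \<and> eqn_size E' < eqn_size E" for E' \<sigma>'
  proof -
    have "card (eqn_vars E') < card (eqn_vars E) \<or>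
        card (eqn_vars E') \<le> card (eqn_vars E) \<and> eqn_size E' < eqn_size E"
      using that(2) card_mono[OF finite_eqn_vars[of E], of "eqn_vars E'"] by blast
    then show ?thesis using 1(1) that(1) by (auto simp: le_less)
  qed
  show ?case
  proof (cases E)
    case Nil
    then show ?thesis using is_mgu_list_Nil by blast
  next
    case (Cons e E')
    then obtain s t where E: "E = (s, t) # E'" by (cases e) auto
    have \<sigma>: "\<sigma> \<in> unifiers ((s, t) # E')" using 1(2) E by simp
    then show ?thesis
    proof (cases rule: unifiable_Cons_cases)
      case (reduce E'')
      then have "unifiers E'' = unifiers E" "eqn_vars E'' \<subseteq> eqn_vars E" "eqn_size E'' < eqn_size E"
        using E by auto
      then show ?thesis using IH[of \<sigma> E''] 1(2) is_mgu_list_cong by blast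
    next
      case (elim x u)
      then have "\<sigma> \<in> unifiers (subst_eqns (Var(x := u)) E')"
        using \<sigma> unifiers_subst_eqns by (metis subst.simps(1) unifiers_Cons)
      moreover have "card (eqn_vars (subst_eqns (Var(x := u)) E')) < card (eqn_vars E)"
        using card_eqn_vars_elim_var[OF \<open>x \<notin> vars u\<close>, of E'] elim(2) E by simp
      ultimately obtain \<theta> where "is_mgu_list \<theta> (subst_eqns (Var(x := u)) E')"
        using IH by blast
      then show ?thesis
        using is_mgu_list_elim_var[OF \<open>x \<notin> vars u\<close>] is_mgu_list_cong elim(1) E by metis
    qed
  qed
qed

lemma mgu_exists: "subst \<sigma> s = subst \<sigma> t \<Longrightarrow> \<exists>\<theta>. is_mgu \<theta> s t"
  using mgu_list_exists[of \<sigma> "[(s, t)]"] by (auto simp: is_mgu_list_def is_mgu_def fun_eq_iff)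

section \<open>LD-derivations of atomic queries\<close>

definition atomic_query :: "query \<Rightarrow> bool" where
  "atomic_query Q \<longleftrightarrow> (\<forall>A \<in> set Q. is_atom A)"

definition atomic_program :: "program \<Rightarrow> bool" where
  "atomic_program P \<longleftrightarrow> (\<forall>(H, B) \<in> P. is_atom H \<and> atomic_query B)"

lemma is_atom_subst: "is_atom A \<Longrightarrow> is_atom (subst \<sigma> A)"
  by (auto simp: is_atom_def)

lemma atomic_query_simps [simp]:
  "atomic_query []"
  "atomic_query (A # Q) \<longleftrightarrow> is_atom A \<and> atomic_query Q"
  "atomic_query (Q @ Q') \<longleftrightarrow> atomic_query Q \<and> atomic_query Q'"
  by (auto simp: atomic_query_def)

lemma atomic_program_Un [simp]:
  "atomic_program (P \<union> P') \<longleftrightarrow> atomic_program P \<and> atomic_program P'"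
  by (auto simp: atomic_program_def)

lemma ld_step_atomic:
  assumes "atomic_program P" and "ld_step P Q Q'" and "atomic_query Q"
  shows "atomic_query Q'"
proof -
  obtain A R H B \<rho> \<theta> where "Q = A # R" and "(H, B) \<in> P"
    and "Q' = map (subst \<theta>) (map (subst (Var \<circ> \<rho>)) B @ R)"
    using assms(2) unfolding ld_step_def by blast
  then show ?thesis
    using assms(1,3) by (fastforce simp: atomic_program_def atomic_query_def intro: is_atom_subst)
qed

lemma ld_steps_atomic:
  assumes "atomic_program P" and "(ld_step P)\<^sup>*\<^sup>* Q Q'" and "atomic_query Q"
  shows "atomic_query Q'"
  using assms(2,3) by induction (auto intro: ld_step_atomic[OF assms(1)])

lemma calls_atomic:
  assumes "atomic_program P" and "atomic_query Q" and "A \<in> calls P {Q}"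
  shows "is_atom A"
proof -
  obtain A' R \<rho> where "(ld_step P)\<^sup>*\<^sup>* Q (A' # R)" and "A = subst (Var \<circ> \<rho>) A'"
    using assms(3) by (auto simp: calls_def variant_def)
  then have "atomic_query (A' # R)" using ld_steps_atomic[OF assms(1)] assms(2) by blast
  then show ?thesis using \<open>A = _\<close> by (simp add: is_atom_subst)
qed

lemma variant_refl: "variant A A"
  unfolding variant_def by (rule exI[of _ id]) simp

lemma vars_rename: "vars (subst (Var \<circ> \<rho>) t) = \<rho> ` vars t"
  by (auto simp: vars_subst)

lemma fresh_renaming:
  assumes "finite V" and "finite W"
  obtains \<rho> :: "nat \<Rightarrow> nat" where "bij \<rho>" and "\<rho> ` V \<inter> W = {}"
proof
  define N where "N = Max (insert 0 (V \<union> W))"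
  have le_N: "x \<le> N" if "x \<in> V \<union> W" for x
    using assms that by (simp add: N_def)
  \<comment> \<open>an involution moving \<open>{0..N} \<supseteq> V \<union> W\<close> to \<open>{N+1..2N+1}\<close>\<close>
  define \<rho> where "\<rho> x = (if x \<le> N then x + N + 1 else if x \<le> 2 * N + 1 then x - (N + 1) else x)" for x
  show "bij \<rho>" by (rule involuntory_imp_bij) (auto simp: \<rho>_def)
  show "\<rho> ` V \<inter> W = {}" using le_N by (fastforce simp: \<rho>_def)
qed

lemma ld_step_lifting:
  assumes HB: "(H, B) \<in> P" and unif: "subst \<sigma> A = subst \<tau> H"
  obtains Q' \<delta> where "ld_step P (A # R) Q'"
    and "map (subst \<delta>) Q' = map (subst \<tau>) B @ map (subst \<sigma>) R"
proof -
  define V where "V = vars H \<union> (\<Union>b \<in> set B. vars b)"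
  define W where "W = (\<Union>q \<in> set (A # R). vars q)"
  obtain \<rho> where "bij \<rho>" and disj: "\<rho> ` V \<inter> W = {}"
    using fresh_renaming[of V W] by (auto simp: V_def W_def)
  let ?r = "Var \<circ> \<rho>"
  \<comment> \<open>the clause is renamed apart, so \<open>\<tau>\<close> (on the clause) and \<open>\<sigma>\<close> (on the query) combine to \<open>\<phi>\<close>\<close>
  define \<phi> where "\<phi> x = (if x \<in> \<rho> ` V then \<tau> (inv \<rho> x) else \<sigma> x)" for x
  have \<phi>_clause: "subst \<phi> (subst ?r t) = subst \<tau> t" if "vars t \<subseteq> V" for t
  proof -
    have "subst \<phi> (subst ?r t) = subst (\<phi> \<circ> \<rho>) t" by (simp add: subst_subst comp_def)
    also have "\<dots> = subst \<tau> t"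
      using that bij_is_inj[OF \<open>bij \<rho>\<close>] by (intro subst_cong) (auto simp: \<phi>_def)
    finally show ?thesis .
  qed
  have \<phi>_query: "subst \<phi> t = subst \<sigma> t" if "vars t \<subseteq> W" for t
    using that disj by (intro subst_cong) (auto simp: \<phi>_def)
  have "subst \<phi> A = subst \<phi> (subst ?r H)"
    using \<phi>_clause[of H] \<phi>_query[of A] unif by (simp add: V_def W_def)
  then obtain \<theta> where mgu: "is_mgu \<theta> A (subst ?r H)" using mgu_exists by blast
  then obtain \<delta> where "\<forall>x. \<phi> x = subst \<delta> (\<theta> x)"
    using \<open>subst \<phi> A = _\<close> by (auto simp: is_mgu_def)
  then have "subst \<delta> \<circ> \<theta> = \<phi>" by (simp add: fun_eq_iff)
  then have \<delta>: "subst \<delta> (subst \<theta> t) = subst \<phi> t" for t by (simp add: subst_subst)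
  let ?Q' = "map (subst \<theta>) (map (subst ?r) B @ R)"
  have "(vars (subst ?r H) \<union> (\<Union>b \<in> set B. vars (subst ?r b))) \<inter> (\<Union>q \<in> set (A # R). vars q) = {}"
    using disj by (auto simp: vars_rename V_def W_def)
  then have "ld_step P (A # R) ?Q'"
    unfolding ld_step_def using HB \<open>bij \<rho>\<close> mgu by blast
  moreover have "map (subst \<delta>) ?Q' = map (subst \<tau>) B @ map (subst \<sigma>) R"
    using \<phi>_clause \<phi>_query by (auto simp: \<delta> V_def W_def)
  ultimately show ?thesis using that by blast
qed

section \<open>Simulating an extended meta-interpreter by the vanilla one\<close>

fun is_meta_call :: "trm \<Rightarrow> bool" where
  "is_meta_call (Var x) \<longleftrightarrow> False"
| "is_meta_call (Fn f ts) \<longleftrightarrow> f = ''solve'' \<or> f = ''clause''"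

text \<open>In M0, solve has one argument and clause has two.\<close>

fun drop_extra_args :: "trm \<Rightarrow> trm" where
  "drop_extra_args (Var x) = Var x"
| "drop_extra_args (Fn f ts) = Fn f (take (if f = ''solve'' then 1 else 2) ts)"

definition meta_calls :: "query \<Rightarrow> query" where
  "meta_calls Q = map drop_extra_args (filter is_meta_call Q)"

lemma meta_calls_simps [simp]:
  "meta_calls [] = []"
  "meta_calls (A # Q) = (if is_meta_call A then drop_extra_args A # meta_calls Q else meta_calls Q)"
  "meta_calls (Q @ Q') = meta_calls Q @ meta_calls Q'"
  by (simp_all add: meta_calls_def)

lemma is_meta_call_subst: "is_atom A \<Longrightarrow> is_meta_call (subst \<sigma> A) \<longleftrightarrow> is_meta_call A"
  by (auto simp: is_atom_def)

lemma drop_extra_args_subst: "is_atom A \<Longrightarrow> drop_extra_args (subst \<sigma> A) = subst \<sigma> (drop_extra_args A)"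
  by (auto simp: is_atom_def take_map)

lemma meta_calls_subst:
  "atomic_query Q \<Longrightarrow> meta_calls (map (subst \<sigma>) Q) = map (subst \<sigma>) (meta_calls Q)"
  by (induction Q) (auto simp: is_meta_call_subst drop_extra_args_subst)

lemma not_meta_call_if_no_meta: "no_meta A \<Longrightarrow> \<not> is_meta_call A"
  by (cases A) (auto simp: no_meta_def)

lemma meta_calls_no_meta: "\<forall>A \<in> set Q. no_meta A \<Longrightarrow> meta_calls Q = []"
  by (induction Q) (auto simp: not_meta_call_if_no_meta)

definition projects_onto :: "program \<Rightarrow> program \<Rightarrow> bool" where
  "projects_onto P M \<longleftrightarrow> (\<forall>(H, B) \<in> P.
     if is_meta_call H
     then \<exists>(H', B') \<in> M. \<exists>\<tau>. drop_extra_args H = subst \<tau> H' \<and> meta_calls B = map (subst \<tau>) B'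
     else meta_calls B = [])"

lemma ld_step_lifting_meta_call:
  assumes HB': "(H', B') \<in> M" and H': "drop_extra_args H = subst \<tau> H'"
    and "is_atom A" and "is_atom H" and unif: "subst \<theta> A = subst \<theta> H"
    and g: "drop_extra_args A = subst \<sigma> g"
  obtains QM' \<delta> where "ld_step M (g # RM) QM'"
    and "map (subst \<delta>) QM' = map (subst \<theta>) (map (subst \<tau>) B' @ map (subst \<sigma>) RM)"
proof -
  have "subst (subst \<theta> \<circ> \<sigma>) g = drop_extra_args (subst \<theta> A)"
    using g \<open>is_atom A\<close> by (simp add: drop_extra_args_subst subst_subst)
  also have "\<dots> = subst (subst \<theta> \<circ> \<tau>) H'"
    using H' \<open>is_atom H\<close> by (simp add: unif drop_extra_args_subst subst_subst)
  finally obtain QM' \<delta> where "ld_step M (g # RM) QM'"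
    and "map (subst \<delta>) QM' = map (subst (subst \<theta> \<circ> \<tau>)) B' @ map (subst (subst \<theta> \<circ> \<sigma>)) RM"
    using ld_step_lifting[OF HB'] by blast
  then show ?thesis using that by (simp add: subst_comp_subst)
qed

lemma ld_step_simulation:
  assumes proj: "projects_onto P M" and "atomic_program P"
    and step: "ld_step P Q Q'" and "atomic_query Q"
    and Q: "meta_calls Q = map (subst \<sigma>) QM"
  obtains QM' \<sigma>' where "(ld_step M)\<^sup>*\<^sup>* QM QM'" and "meta_calls Q' = map (subst \<sigma>') QM'"
proof -
  obtain A R H B \<rho> \<theta> where QAR: "Q = A # R" and HB: "(H, B) \<in> P"
    and mgu: "is_mgu \<theta> A (subst (Var \<circ> \<rho>) H)"
    and Q': "Q' = map (subst \<theta>) (map (subst (Var \<circ> \<rho>)) B @ R)"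
    using step unfolding ld_step_def by blast
  let ?r = "Var \<circ> \<rho>"
  have atoms: "is_atom A" "atomic_query R" "is_atom H" "atomic_query B"
    using \<open>atomic_query Q\<close> \<open>atomic_program P\<close> QAR HB by (auto simp: atomic_program_def)
  have unif: "subst \<theta> A = subst \<theta> (subst ?r H)"
    using mgu by (simp add: is_mgu_def)
  then have meta_iff: "is_meta_call A \<longleftrightarrow> is_meta_call H"
    using atoms by (metis is_atom_subst is_meta_call_subst)
  have Q'_calls: "meta_calls Q' = map (subst \<theta>) (map (subst ?r) (meta_calls B) @ meta_calls R)"
    using atoms by (simp add: Q' meta_calls_subst subst_comp_subst)
  show ?thesis
  proof (cases "is_meta_call A")
    case False
    then have "meta_calls B = []" and "meta_calls R = map (subst \<sigma>) QM"
      using proj HB meta_iff Q QAR by (auto simp: projects_onto_def)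
    then have "meta_calls Q' = map (subst (subst \<theta> \<circ> \<sigma>)) QM"
      using Q'_calls by (simp add: subst_subst)
    then show ?thesis using that by blast
  next
    case True
    then obtain H' B' \<tau> where HB': "(H', B') \<in> M" and H': "drop_extra_args H = subst \<tau> H'"
      and B': "meta_calls B = map (subst \<tau>) B'"
      using proj HB meta_iff by (fastforce simp: projects_onto_def)
    obtain g RM where QM: "QM = g # RM" and g: "drop_extra_args A = subst \<sigma> g"
      and RM: "meta_calls R = map (subst \<sigma>) RM"
      using Q QAR True by (cases QM) auto
    have "drop_extra_args (subst ?r H) = subst (subst ?r \<circ> \<tau>) H'"
      using atoms by (simp add: drop_extra_args_subst H' subst_subst)
    then obtain QM' \<delta> where "ld_step M QM QM'"
      and "map (subst \<delta>) QM' = map (subst \<theta>) (map (subst (subst ?r \<circ> \<tau>)) B' @ map (subst \<sigma>) RM)"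
      using ld_step_lifting_meta_call[OF HB' _ \<open>is_atom A\<close> is_atom_subst[OF \<open>is_atom H\<close>] unif g] QM
      by blast
    moreover have "\<dots> = meta_calls Q'"
      by (simp add: Q'_calls B' RM subst_comp_subst)
    ultimately show ?thesis using that by (metis r_into_rtranclp)
  qed
qed

lemma ld_steps_simulation:
  assumes "projects_onto P M" and "atomic_program P"
    and "(ld_step P)\<^sup>*\<^sup>* Q Q'" and "atomic_query Q"
    and "meta_calls Q = map (subst \<sigma>) QM"
  shows "\<exists>QM' \<sigma>'. (ld_step M)\<^sup>*\<^sup>* QM QM' \<and> meta_calls Q' = map (subst \<sigma>') QM'"
  using assms(3)
proof induction
  case base
  then show ?case using assms(5) by blast
next
  case (step Q1 Q2)
  then obtain QM1 \<sigma>1 where steps1: "(ld_step M)\<^sup>*\<^sup>* QM QM1"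
    and calls1: "meta_calls Q1 = map (subst \<sigma>1) QM1"
    by blast
  have "atomic_query Q1" using ld_steps_atomic assms(2,4) step(1) by blast
  then obtain QM2 \<sigma>2 where "(ld_step M)\<^sup>*\<^sup>* QM1 QM2" and "meta_calls Q2 = map (subst \<sigma>2) QM2"
    using ld_step_simulation[OF assms(1,2) step(2) _ calls1] by blast
  then show ?case using steps1 by (blast intro: rtranclp_trans)
qed

lemma calls_simulation:
  assumes "projects_onto P M" and "atomic_program P" and "atomic_query Q"
    and "meta_calls Q = map (subst \<sigma>) QM"
    and "A \<in> calls P {Q}" and "is_meta_call A"
  shows "\<exists>A' \<in> calls M {QM}. instance_of (drop_extra_args A) A'"
proof -
  obtain B R \<rho> where steps: "(ld_step P)\<^sup>*\<^sup>* Q (B # R)" and A: "A = subst (Var \<circ> \<rho>) B"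
    using assms(5) unfolding calls_def variant_def by blast
  have "is_atom B" using ld_steps_atomic[OF assms(2) steps assms(3)] by simp
  then have "is_meta_call B" using assms(6) A is_meta_call_subst by blast
  obtain QM' \<sigma>' where stepsM: "(ld_step M)\<^sup>*\<^sup>* QM QM'" and "meta_calls (B # R) = map (subst \<sigma>') QM'"
    using ld_steps_simulation[OF assms(1,2) steps assms(3,4)] by blast
  then obtain g RM where "QM' = g # RM" and g: "drop_extra_args B = subst \<sigma>' g"
    using \<open>is_meta_call B\<close> by (cases QM') auto
  then have "g \<in> calls M {QM}"
    using stepsM variant_refl unfolding calls_def by blast
  moreover have "drop_extra_args A = subst (subst (Var \<circ> \<rho>) \<circ> \<sigma>') g"
    using A g \<open>is_atom B\<close> by (simp add: drop_extra_args_subst subst_subst)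
  ultimately show ?thesis unfolding instance_of_def by blast
qed

lemma projects_onto_Un [simp]:
  "projects_onto (P \<union> P') M \<longleftrightarrow> projects_onto P M \<and> projects_onto P' M"
  unfolding projects_onto_def by (rule ball_Un)

lemma projects_onto_insert:
  "projects_onto (insert c P) M \<longleftrightarrow> projects_onto {c} M \<and> projects_onto P M"
  by (metis insert_is_Un projects_onto_Un)

lemma projects_onto_mono: "projects_onto P M \<Longrightarrow> M \<subseteq> M' \<Longrightarrow> projects_onto P M'"
  unfolding projects_onto_def by (fastforce split: if_splits)

lemma projects_onto_meta_clause:
  assumes "(H', B') \<in> M" and "is_meta_call H"
    and "drop_extra_args H = subst \<tau> H'" and "meta_calls B = map (subst \<tau>) B'"
  shows "projects_onto {(H, B)} M"
  using assms unfolding projects_onto_def by auto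

lemma atomic_program_simps [simp]:
  "atomic_program {}"
  "atomic_program (insert (H, B) P) \<longleftrightarrow> is_atom H \<and> atomic_query B \<and> atomic_program P"
  by (simp_all add: atomic_program_def)

lemma atomic_program_M0: "atomic_program M0"
  by (auto simp: M0_def atomic_program_def is_atom_def)

lemma atomic_program_ce: "atomic_program (ce P)"
  by (auto simp: ce_def atomic_program_def is_atom_def)

lemma atomic_program_ceD: "is_ceD k P F \<Longrightarrow> atomic_program F"
  by (fastforce simp: is_ceD_def atomic_program_def is_atom_def)

lemma projects_onto_ceD:
  assumes "is_ceD k P F"
  shows "projects_onto F (ce P)"
  unfolding projects_onto_def
proof (intro ballI, clarify)
  fix H B assume "(H, B) \<in> F"
  then obtain H0 B0 ss where "H = Fn ''clause'' (H0 # enc_body B0 # ss)" "B = []" "(H0, B0) \<in> P"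
    using assms by (fastforce simp: is_ceD_def)
  then have "projects_onto {(H, B)} (ce P)"
    by (intro projects_onto_meta_clause[where \<tau> = Var]) (auto simp: ce_def)
  then show "if is_meta_call H
    then \<exists>(H', B') \<in> ce P. \<exists>\<tau>. drop_extra_args H = subst \<tau> H' \<and> meta_calls B = map (subst \<tau>) B'
    else meta_calls B = []"
    by (simp add: projects_onto_def)
qed

lemma double_ext_mi_atomic_projects_onto_M0:
  assumes "double_ext_mi D n k"
  shows "atomic_program D \<and> projects_onto D M0"
proof -
  obtain a b t1 t2 t3 t4 t5 t6 s C1 C2 C3 D1 D2 D3 D4 R where
    aux: "\<forall>c \<in> set (C1 @ C2 @ C3 @ D1 @ D2 @ D3 @ D4). is_atom c \<and> no_meta c" and
    R: "\<forall>(H, B) \<in> R. is_atom H \<and> no_meta H \<and> (\<forall>c \<in> set B. is_atom c \<and> no_meta c)" and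
    D: "D = {(Fn ''solve'' (Fn ''true'' [] # t1), C1),
             (Fn ''solve'' (Fn '','' [Var a, Var b] # t2),
                D1 @ [Fn ''solve'' (Var a # t3)] @ D2 @ [Fn ''solve'' (Var b # t4)] @ C2),
             (Fn ''solve'' (Var a # t5),
                D3 @ [Fn ''clause'' (Var a # Var b # s)] @ D4 @ [Fn ''solve'' (Var b # t6)] @ C3)}
           \<union> R"
    using assms unfolding double_ext_mi_def by blast
  have "meta_calls C = []" if "C \<in> {C1, C2, C3, D1, D2, D3, D4}" for C
    using aux that by (auto intro: meta_calls_no_meta)
  then have no_calls: "meta_calls C1 = []" "meta_calls C2 = []" "meta_calls C3 = []"
    "meta_calls D1 = []" "meta_calls D2 = []" "meta_calls D3 = []" "meta_calls D4 = []"
    by simp_all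
  define \<tau> :: "nat \<Rightarrow> trm" where "\<tau> x = (if x = 0 then Var a else Var b)" for x
  have "projects_onto {(Fn ''solve'' (Fn ''true'' [] # t1), C1)} M0"
    by (rule projects_onto_meta_clause[where \<tau> = Var]) (auto simp: M0_def no_calls)
  moreover have "projects_onto {(Fn ''solve'' (Fn '','' [Var a, Var b] # t2),
      D1 @ [Fn ''solve'' (Var a # t3)] @ D2 @ [Fn ''solve'' (Var b # t4)] @ C2)} M0"
    by (rule projects_onto_meta_clause[where \<tau> = \<tau>]) (auto simp: M0_def no_calls \<tau>_def)
  moreover have "projects_onto {(Fn ''solve'' (Var a # t5),
      D3 @ [Fn ''clause'' (Var a # Var b # s)] @ D4 @ [Fn ''solve'' (Var b # t6)] @ C3)} M0"
    by (rule projects_onto_meta_clause[where \<tau> = \<tau> and H' = "Fn ''solve'' [Var 0]"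
          and B' = "[Fn ''clause'' [Var 0, Var 1], Fn ''solve'' [Var 1]]"])
      (auto simp: M0_def no_calls \<tau>_def)
  moreover have "projects_onto R M0"
    using R by (auto simp: projects_onto_def not_meta_call_if_no_meta meta_calls_no_meta)
  moreover have "atomic_program R"
    using R by (auto simp: atomic_program_def atomic_query_def)
  moreover have "atomic_query (C1 @ C2 @ C3 @ D1 @ D2 @ D3 @ D4)"
    using aux by (simp add: atomic_query_def)
  ultimately show ?thesis
    unfolding D by (simp add: projects_onto_insert[of _ "insert _ _"] projects_onto_insert[of _ R] is_atom_def)
qed

theorem mainTheorem6:
  fixes D P F :: program and n k :: nat and Q0 :: trm and u :: "trm list"
  assumes "double_ext_mi D n k"
    and "definite_program P"
    and "\<forall>(H, B) \<in> P. in_obj_lang H \<and> (\<forall>c \<in> set B. in_obj_lang c)"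
    and "is_ceD k P F"
    and "is_atom Q0" and "in_obj_lang Q0"
    and "length u = n"
  shows "\<forall>Q ts. length ts = n \<longrightarrow>
           Fn ''solve'' (Q # ts) \<in> calls (D \<union> F) {[Fn ''solve'' (Q0 # u)]} \<longrightarrow>
           (\<exists>G. Fn ''solve'' [G] \<in> calls (M0 \<union> ce P) {[Fn ''solve'' [Q0]]} \<and> instance_of Q G)"
proof (intro allI impI)
  fix Q ts
  assume call: "Fn ''solve'' (Q # ts) \<in> calls (D \<union> F) {[Fn ''solve'' (Q0 # u)]}"
  have D: "atomic_program D" "projects_onto D M0"
    using double_ext_mi_atomic_projects_onto_M0[OF assms(1)] by auto
  have proj: "projects_onto (D \<union> F) (M0 \<union> ce P)"
    using projects_onto_mono[OF D(2)] projects_onto_mono[OF projects_onto_ceD[OF assms(4)]] by simp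
  have atomic: "atomic_program (D \<union> F)"
    using D(1) atomic_program_ceD[OF assms(4)] by simp
  have init: "meta_calls [Fn ''solve'' (Q0 # u)] = map (subst Var) [Fn ''solve'' [Q0]]"
    by simp
  obtain G' where G': "G' \<in> calls (M0 \<union> ce P) {[Fn ''solve'' [Q0]]}"
    and "instance_of (Fn ''solve'' [Q]) G'"
    using calls_simulation[OF proj atomic _ init call] by (auto simp: is_atom_def)
  moreover obtain f xs where "G' = Fn f xs"
    using calls_atomic[OF _ _ G'] atomic_program_M0 atomic_program_ce by (auto simp: is_atom_def)
  ultimately obtain G where "G' = Fn ''solve'' [G]" and "instance_of Q G"
    by (cases xs) (auto simp: instance_of_def)
  then show "\<exists>G. Fn ''solve'' [G] \<in> calls (M0 \<union> ce P) {[Fn ''solve'' [Q0]]} \<and> instance_of Q G"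
    using G' by blast
qed

end
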